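(* Let $\mathcal{B}$ be a finite relational structure with domain $B$ over signature $\sigma$, and let $f$ be a shop on $B$ that is an equivalence relation (i.e. there is an equivalence relation $\sim$ on $B$ with $f(x)$ equal to the $\sim$-class of $x$ for every $x$) and that is a she of $\mathcal{B}$. Then for every sentence $\varphi$ of $\{\exists,\forall,\wedge,\vee\}$-FO over $\sigma$, $\mathcal{B}\models\varphi$ if and only if $\mathcal{B}_{/f}\models\varphi$; that is, the problems $\{\exists,\forall,\wedge,\vee\}$-FO$(\mathcal{B})$ and $\{\exists,\forall,\wedge,\vee\}$-FO$(\mathcal{B}_{/f})$ coincide.
   Context: $\{\exists,\forall,\wedge,\vee\}$-FO is the positive equality-free fragment of first-order logic: formulas built from atomic formulas $R(w_1,\ldots,w_r)$ ($R\in\sigma$) using only $\wedge,\vee,\exists,\forall$. The problem $\{\exists,\forall,\wedge,\vee\}$-FO$(\mathcal{C})$ takes as input such a sentence and asks whether $\mathcal{C}$ satisfies it. A shop on $B$ is a map $f:B\to\mathcal{P}(B)\setminus\{\emptyset\}$ such that every $y\in B$ lies in some $f(x)$. A she of $\mathcal{B}$ is a shop $f$ such that for every $R\in\sigma$ of arity $i$, if $\mathcal{B}\models R(x_1,\ldots,x_i)$ then $\mathcal{B}\models R(y_1,\ldots,y_i)$ for all $y_j\in f(x_j)$. For $f$ an equivalence relation, $\mathcal{B}_{/f}$ is the $\sigma$-structure whose elements are the equivalence classes of $f$, in which $R(\tilde b_1,\ldots,\tilde b_r)$ holds iff $\mathcal{B}\models R(b_1,\ldots,b_r)$ for some representatives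 $b_j\in\tilde b_j$. *)

theory Defs
  imports Main
begin

record ('a, 'r) struc =
  sdom :: "'a set"
  srel :: "'r \<Rightarrow> 'a list \<Rightarrow> bool"

definition is_struc :: "('r \<Rightarrow> nat) \<Rightarrow> ('a, 'r) struc \<Rightarrow> bool" where
  "is_struc sig S \<longleftrightarrow>
     (\<forall>R xs. srel S R xs \<longrightarrow> length xs = sig R \<and> set xs \<subseteq> sdom S)"

datatype 'r pfo =
    Atom 'r "nat list"
  | Conj "'r pfo" "'r pfo"
  | Disj "'r pfo" "'r pfo"
  | Ex nat "'r pfo"
  | All nat "'r pfo"

fun wf_pfo :: "('r \<Rightarrow> nat) \<Rightarrow> 'r pfo \<Rightarrow> bool" where
  "wf_pfo sig (Atom R ws) = (length ws = sig R)"
| "wf_pfo sig (Conj p q) = (wf_pfo sig p \<and> wf_pfo sig q)"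
| "wf_pfo sig (Disj p q) = (wf_pfo sig p \<and> wf_pfo sig q)"
| "wf_pfo sig (Ex v p) = wf_pfo sig p"
| "wf_pfo sig (All v p) = wf_pfo sig p"

fun fv :: "'r pfo \<Rightarrow> nat set" where
  "fv (Atom R ws) = set ws"
| "fv (Conj p q) = fv p \<union> fv q"
| "fv (Disj p q) = fv p \<union> fv q"
| "fv (Ex v p) = fv p - {v}"
| "fv (All v p) = fv p - {v}"

definition is_sentence :: "('r \<Rightarrow> nat) \<Rightarrow> 'r pfo \<Rightarrow> bool" where
  "is_sentence sig \<phi> \<longleftrightarrow> wf_pfo sig \<phi> \<and> fv \<phi> = {}"

fun sat :: "('a, 'r) struc \<Rightarrow> (nat \<Rightarrow> 'a) \<Rightarrow> 'r pfo \<Rightarrow> bool" where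
  "sat S e (Atom R ws) = srel S R (map e ws)"
| "sat S e (Conj p q) = (sat S e p \<and> sat S e q)"
| "sat S e (Disj p q) = (sat S e p \<or> sat S e q)"
| "sat S e (Ex v p) = (\<exists>a\<in>sdom S. sat S (e(v := a)) p)"
| "sat S e (All v p) = (\<forall>a\<in>sdom S. sat S (e(v := a)) p)"

text \<open>Satisfaction of a sentence (the assignment is irrelevant for sentences).\<close>
definition models :: "('a, 'r) struc \<Rightarrow> 'r pfo \<Rightarrow> bool" where
  "models S \<phi> \<longleftrightarrow> sat S (\<lambda>_. undefined) \<phi>"

definition is_shop :: "'a set \<Rightarrow> ('a \<Rightarrow> 'a set) \<Rightarrow> bool" where
  "is_shop B f \<longleftrightarrow> (\<forall>x\<in>B. f x \<noteq> {} \<and> f x \<subseteq> B) \<and> (\<forall>y\<in>B. \<exists>x\<in>B. y \<in> f x)"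

definition is_she :: "('a, 'r) struc \<Rightarrow> ('a \<Rightarrow> 'a set) \<Rightarrow> bool" where
  "is_she S f \<longleftrightarrow> is_shop (sdom S) f \<and>
     (\<forall>R xs ys. srel S R xs \<longrightarrow> list_all2 (\<lambda>x y. y \<in> f x) xs ys \<longrightarrow> srel S R ys)"

definition shop_is_equiv :: "'a set \<Rightarrow> ('a \<Rightarrow> 'a set) \<Rightarrow> bool" where
  "shop_is_equiv B f \<longleftrightarrow> (\<exists>r. equiv B r \<and> (\<forall>x\<in>B. f x = r `` {x}))"

definition quot_struc :: "('a, 'r) struc \<Rightarrow> ('a \<Rightarrow> 'a set) \<Rightarrow> ('a set, 'r) struc" where
  "quot_struc S f =
     \<lparr> sdom = f ` sdom S,
       srel = (\<lambda>R cs. set cs \<subseteq> f ` sdom S \<and>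
                 (\<exists>bs. list_all2 (\<in>) bs cs \<and> srel S R bs)) \<rparr>"

end

theory Submission
  imports Defs
begin

text \<open>Sending each element to its class commutes with assignments and relations: a tuple of
  classes is related in the quotient iff the tuple of any representatives is related in the
  structure, because the she property lets one move freely between representatives of the same
  class. Hence satisfaction of a positive equality-free formula is preserved by an induction on
  the formula, where the quantifier cases use that every class has a representative.\<close>

lemma sat_cong_fv:
  assumes "\<forall>v\<in>fv \<phi>. e v = e' v"
  shows "sat S e \<phi> = sat S e' \<phi>"
  using assms
proof (induction \<phi> arbitrary: e e')
  case (Atom R ws)
  then show ?case by (simp cong: map_cong)
next
  case (Ex v p)
  then have "\<And>a. sat S (e(v := a)) p = sat S (e'(v := a)) p" by (intro Ex.IH) auto
  then show ?case by simp
next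
  case (All v p)
  then have "\<And>a. sat S (e(v := a)) p = sat S (e'(v := a)) p" by (intro All.IH) auto
  then show ?case by simp
next
  case (Conj p q)
  then show ?case by (metis UnCI fv.simps(2) sat.simps(2))
next
  case (Disj p q)
  then show ?case by (metis UnCI fv.simps(3) sat.simps(3))
qed

lemma srel_quot_struc_map_iff:
  assumes eq: "equiv (sdom S) r" and classes: "\<forall>x\<in>sdom S. f x = r `` {x}"
    and she: "is_she S f" and xs: "set xs \<subseteq> sdom S"
  shows "srel (quot_struc S f) R (map f xs) \<longleftrightarrow> srel S R xs"
proof
  assume "srel (quot_struc S f) R (map f xs)"
  then obtain bs where bs: "list_all2 (\<in>) bs (map f xs)" and "srel S R bs"
    by (auto simp: quot_struc_def)
  have "list_all2 (\<lambda>b x. x \<in> f b) bs xs"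
  proof (rule list_all2_all_nthI)
    show "length bs = length xs" using bs by (simp add: list_all2_lengthD)
    fix i assume i: "i < length bs"
    with bs xs have "bs ! i \<in> r `` {xs ! i}" and "xs ! i \<in> sdom S"
      by (auto simp: list_all2_conv_all_nth classes subset_iff)
    with eq classes show "xs ! i \<in> f (bs ! i)"
      by (auto simp: equiv_def sym_def dest: equiv_class_eq)
  qed
  with she \<open>srel S R bs\<close> show "srel S R xs" by (auto simp: is_she_def)
next
  assume "srel S R xs"
  have "x \<in> f x" if "x \<in> set xs" for x
    using that xs classes equiv_class_self[OF eq] by auto
  then have "list_all2 (\<in>) xs (map f xs)"
    by (simp add: list_all2_conv_all_nth)
  with \<open>srel S R xs\<close> xs show "srel (quot_struc S f) R (map f xs)"
    by (auto simp: quot_struc_def)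
qed

lemma sdom_quot_struc [simp]: "sdom (quot_struc S f) = f ` sdom S"
  by (simp add: quot_struc_def)

lemma sat_quot_struc_iff:
  assumes eq: "equiv (sdom S) r" and classes: "\<forall>x\<in>sdom S. f x = r `` {x}"
    and she: "is_she S f" and e: "\<forall>v\<in>fv \<phi>. e v \<in> sdom S"
  shows "sat (quot_struc S f) (f \<circ> e) \<phi> \<longleftrightarrow> sat S e \<phi>"
  using e
proof (induction \<phi> arbitrary: e)
  case (Atom R ws)
  then have "set (map e ws) \<subseteq> sdom S" by auto
  from srel_quot_struc_map_iff[OF eq classes she this] show ?case by (simp add: comp_def)
next
  case (Ex v p)
  have "sat (quot_struc S f) ((f \<circ> e)(v := f a)) p \<longleftrightarrow> sat S (e(v := a)) p"
    if "a \<in> sdom S" for a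
  proof -
    have "\<forall>w\<in>fv p. (e(v := a)) w \<in> sdom S" using Ex.prems that by auto
    from Ex.IH[OF this] show ?thesis by (simp only: fun_upd_comp)
  qed
  then show ?case by (simp del: fun_upd_apply o_apply)
next
  case (All v p)
  have "sat (quot_struc S f) ((f \<circ> e)(v := f a)) p \<longleftrightarrow> sat S (e(v := a)) p"
    if "a \<in> sdom S" for a
  proof -
    have "\<forall>w\<in>fv p. (e(v := a)) w \<in> sdom S" using All.prems that by auto
    from All.IH[OF this] show ?thesis by (simp only: fun_upd_comp)
  qed
  then show ?case by (simp del: fun_upd_apply o_apply)
qed auto

theorem lemma3p10:
  fixes sig :: "'r \<Rightarrow> nat" and S :: "('a, 'r) struc" and f :: "'a \<Rightarrow> 'a set"
  assumes "is_struc sig S"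
    and "finite (sdom S)"
    and "is_shop (sdom S) f"
    and "shop_is_equiv (sdom S) f"
    and "is_she S f"
    and "is_sentence sig \<phi>"
  shows "models S \<phi> \<longleftrightarrow> models (quot_struc S f) \<phi>"
proof -
  obtain r where eq: "equiv (sdom S) r" and classes: "\<forall>x\<in>sdom S. f x = r `` {x}"
    using assms(4) by (auto simp: shop_is_equiv_def)
  have closed: "fv \<phi> = {}" using assms(6) by (simp add: is_sentence_def)
  have "sat (quot_struc S f) (\<lambda>_. undefined) \<phi> = sat (quot_struc S f) (f \<circ> (\<lambda>_. undefined)) \<phi>"
    by (rule sat_cong_fv) (simp add: closed)
  also have "\<dots> = sat S (\<lambda>_. undefined) \<phi>"
    by (rule sat_quot_struc_iff[OF eq classes assms(5)]) (simp add: closed)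
  finally show ?thesis by (simp add: models_def)
qed

end
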